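(* Let $d\in\mathbb{N}$, $k\in\{1,\dots,d\}$, $\varepsilon>0$, and $\mathbf{e}_1,\mathbf{e}_2\in\mathbb{R}^d$. Define $$\psi_{feat}(\mathbf{e}_2):=\begin{cases}\max_{i\notin \mathrm{TopFeatures}(\mathbf{e}_1;k)}|e_{2i}| & (k<d),\\ -\varepsilon & (k=d),\end{cases}$$ and $$\ell_{\mathrm{Ftr}}(\mathbf{e}_2;\mathbf{e}_1,k):=\frac{1}{k}\sum_{i\in \mathrm{TopFeatures}(\mathbf{e}_1;k)}\max\big(0,\ \psi_{feat}(\mathbf{e}_2)-|e_{2i}|+\varepsilon\big).$$ Then $$1-\mathrm{FeatAgree}(\mathbf{e}_1,\mathbf{e}_2;k)\le \varepsilon^{-1}\,\ell_{\mathrm{Ftr}}(\mathbf{e}_2;\mathbf{e}_1,k).$$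
   Context: For $\mathbf{x}\in\mathbb{R}^d$, $\mathrm{rank}(\mathbf{x},i)$ denotes the position of index $i$ when the indices $1,\dots,d$ are ordered by descending $|x_i|$, i.e. $\mathrm{rank}(\mathbf{x},i)=|\{j\in[d]:|x_j|\ge|x_i|\}|$, with ties broken so that ranks form a permutation of $[d]$ (paper's convention: if $|x_i|=|x_j|$ with $i>j$ then $\mathrm{rank}(\mathbf{x},j)=\mathrm{rank}(\mathbf{x},i)+1$). $\mathrm{TopFeatures}(\mathbf{x};k):=\{i\in[d]:\mathrm{rank}(\mathbf{x},i)\le k\}$. The top-$k$ feature agreement is $\mathrm{FeatAgree}(\mathbf{e}_1,\mathbf{e}_2;k):=\frac1k\big|\{i\in[d]: i\in\mathrm{TopFeatures}(\mathbf{e}_1;k)\wedge i\in\mathrm{TopFeatures}(\mathbf{e}_2;k)\}\big|$. *)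

theory Defs
  imports "HOL-Analysis.Analysis"
begin

text \<open>Vectors in R^d are functions nat => real, only the coordinates 1..d matter.
  rank x i = number of j in {1..d} with |x j| > |x i|, or |x j| = |x i| and j >= i
  (the paper's tie-break: among equal magnitudes, the larger index gets the smaller rank).\<close>

definition rank :: "nat \<Rightarrow> (nat \<Rightarrow> real) \<Rightarrow> nat \<Rightarrow> nat" where
  "rank d x i = card {j \<in> {1..d}. \<bar>x j\<bar> > \<bar>x i\<bar> \<or> (\<bar>x j\<bar> = \<bar>x i\<bar> \<and> j \<ge> i)}"

definition TopFeatures :: "nat \<Rightarrow> (nat \<Rightarrow> real) \<Rightarrow> nat \<Rightarrow> nat set" where
  "TopFeatures d x k = {i \<in> {1..d}. rank d x i \<le> k}"

definition FeatAgree :: "nat \<Rightarrow> (nat \<Rightarrow> real) \<Rightarrow> (nat \<Rightarrow> real) \<Rightarrow> nat \<Rightarrow> real" where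
  "FeatAgree d e1 e2 k = card (TopFeatures d e1 k \<inter> TopFeatures d e2 k) / real k"

definition psi_feat :: "nat \<Rightarrow> (nat \<Rightarrow> real) \<Rightarrow> nat \<Rightarrow> real \<Rightarrow> (nat \<Rightarrow> real) \<Rightarrow> real" where
  "psi_feat d e1 k \<epsilon> e2 =
     (if k < d then Max ((\<lambda>i. \<bar>e2 i\<bar>) ` ({1..d} - TopFeatures d e1 k)) else - \<epsilon>)"

definition loss_Ftr :: "nat \<Rightarrow> real \<Rightarrow> (nat \<Rightarrow> real) \<Rightarrow> (nat \<Rightarrow> real) \<Rightarrow> nat \<Rightarrow> real" where
  "loss_Ftr d \<epsilon> e2 e1 k =
     (1 / real k) * (\<Sum>i\<in>TopFeatures d e1 k. max 0 (psi_feat d e1 k \<epsilon> e2 - \<bar>e2 i\<bar> + \<epsilon>))"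

end

theory Submission
  imports Defs
begin

text \<open>Let T1, T2 be the top-k sets of e1, e2. Both have exactly k elements, so every
  i \<in> T1 - T2 is displaced by some j \<in> T2 - T1, and then |e2 i| \<le> |e2 j| \<le> psi_feat:
  the hinge term of i is at least \<epsilon>. Summing over the |T1 - T2| = k (1 - FeatAgree)
  such i gives the bound.\<close>

lemma rank_less:
  assumes "i \<in> {1..d}" "j \<in> {1..d}" "\<bar>x j\<bar> > \<bar>x i\<bar> \<or> (\<bar>x j\<bar> = \<bar>x i\<bar> \<and> j > i)"
  shows "rank d x j < rank d x i"
proof -
  let ?S = "\<lambda>i. {l \<in> {1..d}. \<bar>x l\<bar> > \<bar>x i\<bar> \<or> (\<bar>x l\<bar> = \<bar>x i\<bar> \<and> l \<ge> i)}"
  have "?S j \<subset> ?S i"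
    using assms by auto
  then have "card (?S j) < card (?S i)"
    by (intro psubset_card_mono) auto
  then show ?thesis
    unfolding rank_def .
qed

lemma rank_less_if_abs_less:
  assumes "i \<in> {1..d}" "j \<in> {1..d}" "\<bar>x i\<bar> < \<bar>x j\<bar>"
  shows "rank d x j < rank d x i"
  using rank_less[OF assms(1,2)] assms(3) by simp

lemma inj_on_rank: "inj_on (rank d x) {1..d}"
proof (rule inj_onI)
  fix i j
  assume ij: "i \<in> {1..d}" "j \<in> {1..d}" "rank d x i = rank d x j"
  show "i = j"
  proof (rule ccontr)
    assume "i \<noteq> j"
    then have "(\<bar>x j\<bar> > \<bar>x i\<bar> \<or> (\<bar>x j\<bar> = \<bar>x i\<bar> \<and> j > i)) \<or>
               (\<bar>x i\<bar> > \<bar>x j\<bar> \<or> (\<bar>x i\<bar> = \<bar>x j\<bar> \<and> i > j))"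
      by linarith
    then show False
      using rank_less[of i d j x] rank_less[of j d i x] ij by auto
  qed
qed

lemma rank_in_range:
  assumes "i \<in> {1..d}"
  shows "rank d x i \<in> {1..d}"
proof -
  let ?S = "{l \<in> {1..d}. \<bar>x l\<bar> > \<bar>x i\<bar> \<or> (\<bar>x l\<bar> = \<bar>x i\<bar> \<and> l \<ge> i)}"
  have "i \<in> ?S"
    using assms by simp
  then have "card ?S \<noteq> 0"
    by auto
  moreover have "card ?S \<le> card {1..d}"
    by (rule card_mono) auto
  then have "card ?S \<le> d"
    by simp
  ultimately have "1 \<le> card ?S \<and> card ?S \<le> d"
    by linarith
  then show ?thesis
    unfolding rank_def by (rule atLeastAtMost_iff[THEN iffD2])
qed

lemma rank_image: "rank d x ` {1..d} = {1..d}"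
  using inj_on_rank rank_in_range by (intro endo_inj_surj) auto

lemma TopFeatures_subset: "TopFeatures d x k \<subseteq> {1..d}"
  unfolding TopFeatures_def by auto

lemma finite_TopFeatures: "finite (TopFeatures d x k)"
  by (rule finite_subset[OF TopFeatures_subset]) simp

lemma TopFeatures_eq_all:
  assumes "d \<le> k"
  shows "TopFeatures d x k = {1..d}"
proof -
  have "rank d x i \<le> k" if "i \<in> {1..d}" for i
    using rank_in_range[OF that, of x] assms by simp
  then show ?thesis
    unfolding TopFeatures_def by blast
qed

lemma card_TopFeatures:
  assumes "k \<le> d"
  shows "card (TopFeatures d x k) = k"
proof -
  have "rank d x ` TopFeatures d x k = rank d x ` {1..d} \<inter> {..k}"
    unfolding TopFeatures_def by blast
  also have "\<dots> = {1..k}"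
    unfolding rank_image using assms by auto
  finally have "rank d x ` TopFeatures d x k = {1..k}" .
  moreover have "inj_on (rank d x) (TopFeatures d x k)"
    using inj_on_rank TopFeatures_subset by (rule inj_on_subset)
  ultimately show ?thesis
    using card_image by fastforce
qed

lemma abs_le_if_TopFeatures:
  assumes "i \<in> {1..d} - TopFeatures d x k" "j \<in> TopFeatures d x k"
  shows "\<bar>x i\<bar> \<le> \<bar>x j\<bar>"
proof (rule ccontr)
  have i: "i \<in> {1..d}" "k < rank d x i"
    using assms(1) unfolding TopFeatures_def by auto
  have j: "j \<in> {1..d}" "rank d x j \<le> k"
    using assms(2) unfolding TopFeatures_def by auto
  assume "\<not> \<bar>x i\<bar> \<le> \<bar>x j\<bar>"
  then have "rank d x i < rank d x j"
    using rank_less_if_abs_less[OF j(1) i(1)] by simp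
  then show False
    using i(2) j(2) by simp
qed

lemma abs_le_psi_feat:
  assumes "j \<in> {1..d} - TopFeatures d e1 k"
  shows "\<bar>e2 j\<bar> \<le> psi_feat d e1 k \<epsilon> e2"
proof -
  have "k < d"
  proof (rule ccontr)
    assume "\<not> k < d"
    then have "TopFeatures d e1 k = {1..d}"
      by (intro TopFeatures_eq_all) simp
    then show False
      using assms by simp
  qed
  have "\<bar>e2 j\<bar> \<in> (\<lambda>i. \<bar>e2 i\<bar>) ` ({1..d} - TopFeatures d e1 k)"
    using assms by (rule imageI)
  then have "\<bar>e2 j\<bar> \<le> Max ((\<lambda>i. \<bar>e2 i\<bar>) ` ({1..d} - TopFeatures d e1 k))"
    by (intro Max_ge) simp_all
  then show ?thesis
    unfolding psi_feat_def using \<open>k < d\<close> by simp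
qed

lemma ex_Diff_of_card_eq:
  assumes "finite A" "card A = card B" "a \<in> A - B"
  obtains b where "b \<in> B - A"
proof -
  have "\<not> B \<subseteq> A - {a}"
  proof
    assume "B \<subseteq> A - {a}"
    then have "card B \<le> card (A - {a})"
      using assms(1) by (intro card_mono) simp_all
    moreover have "card (A - {a}) = card A - 1"
      using assms(3) by (simp add: card_Diff_singleton)
    moreover have "card A > 0"
      using assms(1,3) card_gt_0_iff by blast
    ultimately show False
      using assms(2) by linarith
  qed
  then show ?thesis
    using that assms(3) by blast
qed

lemma hinge_ge_eps_if_displaced:
  assumes "k \<le> d" "i \<in> TopFeatures d e1 k - TopFeatures d e2 k"
  shows "\<epsilon> \<le> max 0 (psi_feat d e1 k \<epsilon> e2 - \<bar>e2 i\<bar> + \<epsilon>)"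
proof -
  have "card (TopFeatures d e1 k) = card (TopFeatures d e2 k)"
    using card_TopFeatures[OF assms(1)] by simp
  then obtain j where j: "j \<in> TopFeatures d e2 k - TopFeatures d e1 k"
    using ex_Diff_of_card_eq[OF finite_TopFeatures _ assms(2)] by blast
  have "i \<in> {1..d} - TopFeatures d e2 k" "j \<in> {1..d} - TopFeatures d e1 k"
    using assms(2) j TopFeatures_subset[of d e1 k] TopFeatures_subset[of d e2 k] by blast+
  then have "\<bar>e2 i\<bar> \<le> \<bar>e2 j\<bar>"
    using abs_le_if_TopFeatures j by blast
  also have "\<dots> \<le> psi_feat d e1 k \<epsilon> e2"
    using abs_le_psi_feat \<open>j \<in> {1..d} - TopFeatures d e1 k\<close> by blast
  finally show ?thesis
    by simp
qed

lemma one_minus_FeatAgree: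
  assumes "1 \<le> k" "k \<le> d"
  shows "1 - FeatAgree d e1 e2 k
           = card (TopFeatures d e1 k - TopFeatures d e2 k) / real k"
proof -
  let ?T1 = "TopFeatures d e1 k" and ?T2 = "TopFeatures d e2 k"
  have "card (?T1 - ?T2) = k - card (?T1 \<inter> ?T2)"
    using card_TopFeatures[OF assms(2)] finite_TopFeatures by (simp add: card_Diff_subset_Int)
  moreover have "card (?T1 \<inter> ?T2) \<le> k"
    using card_mono[OF finite_TopFeatures Int_lower1] card_TopFeatures[OF assms(2)] by metis
  ultimately have "real (card (?T1 - ?T2)) = real k - card (?T1 \<inter> ?T2)"
    by simp
  then show ?thesis
    using assms(1) unfolding FeatAgree_def by (simp add: diff_divide_distrib)
qed

theorem lemma1:
  fixes d k :: nat and \<epsilon> :: real and e1 e2 :: "nat \<Rightarrow> real"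
  assumes "1 \<le> k" and "k \<le> d" and "\<epsilon> > 0"
  shows "1 - FeatAgree d e1 e2 k \<le> (1 / \<epsilon>) * loss_Ftr d \<epsilon> e2 e1 k"
proof -
  define T1 where "T1 = TopFeatures d e1 k"
  define T2 where "T2 = TopFeatures d e2 k"
  define h where "h i = max 0 (psi_feat d e1 k \<epsilon> e2 - \<bar>e2 i\<bar> + \<epsilon>)" for i
  have "\<epsilon> * card (T1 - T2) = (\<Sum>i\<in>T1 - T2. \<epsilon>)"
    by simp
  also have "\<dots> \<le> (\<Sum>i\<in>T1 - T2. h i)"
    using hinge_ge_eps_if_displaced[OF assms(2)] by (intro sum_mono) (auto simp: T1_def T2_def h_def)
  also have "\<dots> \<le> (\<Sum>i\<in>T1. h i)"
    using finite_TopFeatures by (intro sum_mono2) (auto simp: T1_def h_def)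
  finally have "card (T1 - T2) \<le> (1 / \<epsilon>) * (\<Sum>i\<in>T1. h i)"
    using assms(3) by (simp add: field_simps)
  then have "card (T1 - T2) / real k \<le> (1 / \<epsilon>) * (\<Sum>i\<in>T1. h i) / real k"
    by (rule divide_right_mono) simp
  then show ?thesis
    using one_minus_FeatAgree[OF assms(1,2)] by (simp add: loss_Ftr_def T1_def T2_def h_def)
qed

end
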